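(* For any unit types $U,V$ and any types $T,R$: if $V\to R\preceq U\to T$, then there exist unit types $\vec W=W_1,\dots,W_n$ and type variables $\vec X=X_1,\dots,X_n$ such that $U\to T\equiv(V\to R)[\vec W/\vec X]$.
   Context: Fix a commutative ring $(\mathcal S,+,\times)$. Types: $T ::= U \mid \forall X.T \mid \alpha.T \mid \overline0$; unit types: $U ::= X \mid U\to T \mid \forall X.U$ ($\alpha\in\mathcal S$, $X$ type variables). Type variables are only substituted by unit types; $T[\vec W/\vec X]$ means $T[W_1/X_1]\cdots[W_n/X_n]$ and $(\alpha.T)[U/X]=\alpha.T[U/X]$. Type equivalence $\equiv$ is the least congruence with $\alpha.\overline0\equiv\overline0$, $0.T\equiv\overline0$, $1.T\equiv T$, $\alpha.(\beta.T)\equiv(\alpha\times\beta).T$, $\forall X.\alpha.T\equiv\alpha.\forall X.T$. Write $T\prec R$ if either $R\equiv\forall X.T$ for some $X$, or $T\equiv\forall X.S$ and $R\equiv S[U/X]$ for some type $S$ and unit type $U$; $\preceq$ is the reflexive and transitive closure of $\prec$. *)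

theory Defs
  imports Main
begin

datatype 's ty =
    TVar nat
  | Arr "'s ty" "'s ty"
  | Forall nat "'s ty"
  | Scal 's "'s ty"
  | Zero

fun wf_ty :: "'s ty \<Rightarrow> bool" and unit_ty :: "'s ty \<Rightarrow> bool" where
  "wf_ty (TVar X) = True"
| "wf_ty (Arr U T) = (unit_ty U \<and> wf_ty T)"
| "wf_ty (Forall X T) = wf_ty T"
| "wf_ty (Scal a T) = wf_ty T"
| "wf_ty Zero = True"
| "unit_ty (TVar X) = True"
| "unit_ty (Arr U T) = (unit_ty U \<and> wf_ty T)"
| "unit_ty (Forall X U) = unit_ty U"
| "unit_ty (Scal a T) = False"
| "unit_ty Zero = False"

fun fv :: "'s ty \<Rightarrow> nat set" where
  "fv (TVar X) = {X}"
| "fv (Arr U T) = fv U \<union> fv T"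
| "fv (Forall X T) = fv T - {X}"
| "fv (Scal a T) = fv T"
| "fv Zero = {}"

fun vars :: "'s ty \<Rightarrow> nat set" where
  "vars (TVar X) = {X}"
| "vars (Arr U T) = vars U \<union> vars T"
| "vars (Forall X T) = insert X (vars T)"
| "vars (Scal a T) = vars T"
| "vars Zero = {}"

lemma finite_vars: "finite (vars T)"
  by (induction T) auto

lemma fv_subset_vars: "fv T \<subseteq> vars T"
  by (induction T) auto

definition fresh :: "nat set \<Rightarrow> nat" where
  "fresh S = Suc (Max (insert 0 S))"

text \<open>Renaming of free occurrences of Y by Z (capture-free whenever Z does not occur in T).\<close>
fun ren :: "nat \<Rightarrow> nat \<Rightarrow> 's ty \<Rightarrow> 's ty" where
  "ren Y Z (TVar V) = (if V = Y then TVar Z else TVar V)"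
| "ren Y Z (Arr U T) = Arr (ren Y Z U) (ren Y Z T)"
| "ren Y Z (Forall V T) = (if V = Y then Forall V T else Forall V (ren Y Z T))"
| "ren Y Z (Scal a T) = Scal a (ren Y Z T)"
| "ren Y Z Zero = Zero"

lemma size_ren[simp]: "size (ren Y Z T) = size T"
  by (induction T) auto

function subst :: "nat \<Rightarrow> 's ty \<Rightarrow> 's ty \<Rightarrow> 's ty" where
  "subst X W (TVar Y) = (if Y = X then W else TVar Y)"
| "subst X W (Arr U T) = Arr (subst X W U) (subst X W T)"
| "subst X W (Forall Y T) =
     (if Y = X then Forall Y T
      else if Y \<notin> fv W then Forall Y (subst X W T)
      else (let Z = fresh (insert X (vars W \<union> vars T))
            in Forall Z (subst X W (ren Y Z T))))"
| "subst X W (Scal a T) = Scal a (subst X W T)"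
| "subst X W Zero = Zero"
  by pat_completeness auto
termination
  by (relation "measure (\<lambda>(X, W, T). size T)") auto

fun substs :: "(nat \<times> 's ty) list \<Rightarrow> 's ty \<Rightarrow> 's ty" where
  "substs [] T = T"
| "substs ((X, W) # \<sigma>) T = substs \<sigma> (subst X W T)"

inductive ty_equiv :: "'s::comm_ring_1 ty \<Rightarrow> 's ty \<Rightarrow> bool" (infix "\<equiv>\<^sub>T" 50) where
  refl: "wf_ty T \<Longrightarrow> T \<equiv>\<^sub>T T"
| sym: "T \<equiv>\<^sub>T R \<Longrightarrow> R \<equiv>\<^sub>T T"
| trans: "T \<equiv>\<^sub>T R \<Longrightarrow> R \<equiv>\<^sub>T S \<Longrightarrow> T \<equiv>\<^sub>T S"
| cong_arr: "unit_ty U \<Longrightarrow> unit_ty U' \<Longrightarrow> U \<equiv>\<^sub>T U' \<Longrightarrow> T \<equiv>\<^sub>T T' \<Longrightarrow> Arr U T \<equiv>\<^sub>T Arr U' T'"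
| cong_all: "T \<equiv>\<^sub>T T' \<Longrightarrow> Forall X T \<equiv>\<^sub>T Forall X T'"
| cong_scal: "T \<equiv>\<^sub>T T' \<Longrightarrow> Scal a T \<equiv>\<^sub>T Scal a T'"
| scal_zero: "Scal a Zero \<equiv>\<^sub>T Zero"
| zero_scal: "wf_ty T \<Longrightarrow> Scal 0 T \<equiv>\<^sub>T Zero"
| one_scal: "wf_ty T \<Longrightarrow> Scal 1 T \<equiv>\<^sub>T T"
| scal_scal: "wf_ty T \<Longrightarrow> Scal a (Scal b T) \<equiv>\<^sub>T Scal (a * b) T"
| all_scal: "wf_ty T \<Longrightarrow> Forall X (Scal a T) \<equiv>\<^sub>T Scal a (Forall X T)"
| alpha: "wf_ty T \<Longrightarrow> Y \<notin> fv (Forall X T) \<Longrightarrow> Forall X T \<equiv>\<^sub>T Forall Y (subst X (TVar Y) T)"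

definition prec1 :: "'s::comm_ring_1 ty \<Rightarrow> 's ty \<Rightarrow> bool" where
  "prec1 T R \<longleftrightarrow>
     (\<exists>X. R \<equiv>\<^sub>T Forall X T) \<or>
     (\<exists>X S U. unit_ty U \<and> T \<equiv>\<^sub>T Forall X S \<and> R \<equiv>\<^sub>T subst X U S)"

definition preceq :: "'s::comm_ring_1 ty \<Rightarrow> 's ty \<Rightarrow> bool" where
  "preceq = prec1\<^sup>*\<^sup>*"

end

theory Submission
  imports Defs
begin

text \<open>Every well-formed type has a locally nameless normal form: either zero, or a single
nonzero scalar in front of the normal form of a unit type, with all quantifiers pushed under
the scalar and bound variables replaced by indices. Type equivalence coincides with equality
of normal forms. Along a \<open>\<prec>\<close>-chain starting at \<open>V \<rightarrow> R\<close> the normal form is always that of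
\<open>\<forall>Ys. (V \<rightarrow> R)[\<sigma>]\<close> for unit substitutions \<open>\<sigma>\<close>: abstraction adds a binder, and instantiation
removes the outermost one and substitutes a unit type. An arrow does not have the normal form
of a quantified type, so at \<open>U \<rightarrow> T\<close> no binder is left, and completeness turns equality of
normal forms into \<open>U \<rightarrow> T \<equiv> (V \<rightarrow> R)[\<sigma>]\<close>.\<close>

datatype 's nty =
    NFree nat
  | NBound nat
  | NArr "'s nty" "'s nty"
  | NAll "'s nty"
  | NScal 's "'s nty"
  | NZero

fun close :: "nat \<Rightarrow> nat \<Rightarrow> 's nty \<Rightarrow> 's nty" where
  "close k X (NFree Y) = (if Y = X then NBound k else NFree Y)"
| "close k X (NBound j) = NBound j"
| "close k X (NArr a b) = NArr (close k X a) (close k X b)"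
| "close k X (NAll a) = NAll (close (Suc k) X a)"
| "close k X (NScal c a) = NScal c (close k X a)"
| "close k X NZero = NZero"

fun lc_at :: "nat \<Rightarrow> 's nty \<Rightarrow> bool" where
  "lc_at k (NFree Y) = True"
| "lc_at k (NBound j) = (j < k)"
| "lc_at k (NArr a b) = (lc_at k a \<and> lc_at k b)"
| "lc_at k (NAll a) = lc_at (Suc k) a"
| "lc_at k (NScal c a) = lc_at k a"
| "lc_at k NZero = True"

fun nsubst :: "nat \<Rightarrow> 's nty \<Rightarrow> 's nty \<Rightarrow> 's nty" where
  "nsubst X w (NFree Y) = (if Y = X then w else NFree Y)"
| "nsubst X w (NBound j) = NBound j"
| "nsubst X w (NArr a b) = NArr (nsubst X w a) (nsubst X w b)"
| "nsubst X w (NAll a) = NAll (nsubst X w a)"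
| "nsubst X w (NScal c a) = NScal c (nsubst X w a)"
| "nsubst X w NZero = NZero"

fun nfv :: "'s nty \<Rightarrow> nat set" where
  "nfv (NFree Y) = {Y}"
| "nfv (NBound j) = {}"
| "nfv (NArr a b) = nfv a \<union> nfv b"
| "nfv (NAll a) = nfv a"
| "nfv (NScal c a) = nfv a"
| "nfv NZero = {}"

fun nforall :: "nat \<Rightarrow> 's nty \<Rightarrow> 's nty" where
  "nforall X (NScal c u) = NScal c (NAll (close 0 X u))"
| "nforall X _ = NZero"

text \<open>The test \<open>a * c = 0\<close> (rather than \<open>a = 0\<close>) is needed because the ring may have zero
divisors.\<close>
fun nscale :: "'s::comm_ring_1 \<Rightarrow> 's nty \<Rightarrow> 's nty" where
  "nscale a (NScal c u) = (if a * c = 0 then NZero else NScal (a * c) u)"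
| "nscale a _ = NZero"

fun nunit :: "'s nty \<Rightarrow> 's nty" where
  "nunit (NScal c u) = u"
| "nunit _ = NZero"

fun nf :: "'s::comm_ring_1 ty \<Rightarrow> 's nty" where
  "nf (TVar X) = NScal 1 (NFree X)"
| "nf (Arr U T) = NScal 1 (NArr (nunit (nf U)) (nf T))"
| "nf (Forall X T) = nforall X (nf T)"
| "nf (Scal a T) = nscale a (nf T)"
| "nf Zero = NZero"

section \<open>Normal forms\<close>

lemma nf_cases: "nf T = NZero \<or> (\<exists>c u. c \<noteq> 0 \<and> nf T = NScal c u)"
  by (induction T) (auto split: if_splits)

lemma nf_unit: "unit_ty U \<Longrightarrow> nf U = NScal 1 (nunit (nf U))"
  by (induction U) (auto, metis nforall.simps(1) nunit.simps(1))

lemma nforall_nf_unit: "unit_ty S \<Longrightarrow> nforall X (nf S) = NScal 1 (NAll (close 0 X (nunit (nf S))))"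
  using nf_unit[of S] by (metis nforall.simps(1))

lemma nforall_neq_arrow: "nforall X t \<noteq> NScal c (NArr a b)"
  by (cases t) auto

lemma lc_at_close: "lc_at k u \<Longrightarrow> lc_at (Suc k) (close k X u)"
  by (induction u arbitrary: k) auto

lemma lc_at_nf: "lc_at 0 (nf T)"
proof (induction T)
  case (Arr U T) then show ?case by (cases "nf U") auto
next
  case (Forall X T) then show ?case by (cases "nf T") (auto intro: lc_at_close)
next
  case (Scal a T) then show ?case by (cases "nf T") auto
qed auto

lemma nfv_close: "nfv (close k X u) = nfv u - {X}"
  by (induction u arbitrary: k) auto

lemma nfv_nf: "nfv (nf T) \<subseteq> fv T"
proof (induction T)
  case (Arr U T) then show ?case by (cases "nf U") auto
next
  case (Forall X T) then show ?case by (cases "nf T") (auto simp: nfv_close)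
next
  case (Scal a T) then show ?case by (cases "nf T") auto
qed auto

lemma nsubst_nfv: "X \<notin> nfv t \<Longrightarrow> nsubst X w t = t"
  by (induction t) auto

lemma close_nfv: "Y \<notin> nfv t \<Longrightarrow> close k Y t = t"
  by (induction t arbitrary: k) auto

lemma close_nsubst: "Y \<noteq> X \<Longrightarrow> Y \<notin> nfv w \<Longrightarrow> close k Y (nsubst X w t) = nsubst X w (close k Y t)"
  by (induction t arbitrary: k) (auto simp: close_nfv)

lemma close_rename: "Y \<notin> nfv u \<or> Y = X \<Longrightarrow> close k Y (nsubst X (NFree Y) u) = close k X u"
  by (induction u arbitrary: k) auto

lemma close_eq_imp_nsubst_eq:
  "lc_at k u \<Longrightarrow> lc_at k u' \<Longrightarrow> close k X u = close k Y u' \<Longrightarrow> nsubst X w u = nsubst Y w u'"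
  by (induction u arbitrary: k u') (case_tac u'; auto split: if_splits)+

lemma nsubst_nforall_same: "nsubst X w (nforall X t) = nforall X t"
  by (cases t) (auto simp: nsubst_nfv nfv_close)

lemma nsubst_nforall:
  "Y \<noteq> X \<Longrightarrow> Y \<notin> nfv w \<Longrightarrow> nsubst X w (nforall Y (nf T)) = nforall Y (nsubst X w (nf T))"
  using nf_cases[of T] by (auto simp: close_nsubst)

lemma nsubst_nscale: "nsubst X w (nscale a (nf T)) = nscale a (nsubst X w (nf T))"
  using nf_cases[of T] by auto

lemma nsubst_nunit: "nunit (nsubst X w (nf T)) = nsubst X w (nunit (nf T))"
  using nf_cases[of T] by auto

lemma nforall_rename: "Y \<notin> nfv t \<or> Y = X \<Longrightarrow> nforall Y (nsubst X (NFree Y) t) = nforall X t"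
  by (cases t) (auto simp: close_rename)

lemma nforall_eq_imp_nsubst_eq:
  assumes "nforall X (nf S) = nforall Y (nf S')"
  shows "nsubst X w (nf S) = nsubst Y w (nf S')"
  using assms lc_at_nf[of S] lc_at_nf[of S'] nf_cases[of S] nf_cases[of S']
  by (auto intro: close_eq_imp_nsubst_eq)

lemma fresh_not_in: "finite S \<Longrightarrow> fresh S \<notin> S"
proof
  assume "finite S" "fresh S \<in> S"
  then have "fresh S \<le> Max (insert 0 S)" by (intro Max_ge) auto
  then show False unfolding fresh_def by simp
qed

lemma nf_ren: "Z \<notin> vars T \<Longrightarrow> nf (ren Y Z T) = nsubst Y (NFree Z) (nf T)"
  by (induction T) (auto simp: nsubst_nunit nsubst_nforall_same nsubst_nforall nsubst_nscale)

lemma nf_subst: "unit_ty W \<Longrightarrow> nf (subst X W T) = nsubst X (nunit (nf W)) (nf T)"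
proof (induction X W T rule: subst.induct)
  case (1 X W Y)
  then show ?case using nf_unit[of W] by auto
next
  case (2 X W U T)
  then show ?case by (simp add: nsubst_nunit)
next
  case (3 X W Y T)
  let ?w = "nunit (nf W)"
  have w_vars: "nfv ?w \<subseteq> vars W"
    using nfv_nf[of W] fv_subset_vars[of W] nf_cases[of W] by auto
  consider (bound) "Y = X" | (free) "Y \<noteq> X" "Y \<notin> fv W" | (capture) "Y \<noteq> X" "Y \<in> fv W"
    by blast
  then show ?case
  proof cases
    case bound
    then show ?thesis by (simp add: nsubst_nforall_same)
  next
    case free
    then have "Y \<notin> nfv ?w" using nfv_nf[of W] nf_cases[of W] by auto
    with free 3 show ?thesis by (simp add: nsubst_nforall)
  next
    case capture
    define Z where "Z = fresh (insert X (vars W \<union> vars T))"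
    have Z: "Z \<noteq> X" "Z \<notin> vars W" "Z \<notin> vars T"
      using fresh_not_in[of "insert X (vars W \<union> vars T)"] finite_vars unfolding Z_def by auto
    have rename: "nforall Z (nf (ren Y Z T)) = nforall Y (nf T)"
      unfolding nf_ren[OF Z(3)] using Z(3) nfv_nf[of T] fv_subset_vars[of T]
      by (intro nforall_rename) auto
    have "nf (subst X W (Forall Y T)) = nforall Z (nf (subst X W (ren Y Z T)))"
      using capture by (simp add: Z_def[symmetric] Let_def)
    also have "\<dots> = nforall Z (nsubst X ?w (nf (ren Y Z T)))"
      using "3.IH"(2)[OF capture(1) _ Z_def] capture "3.prems" by simp
    also have "\<dots> = nsubst X ?w (nforall Z (nf (ren Y Z T)))"
      using Z w_vars by (subst nsubst_nforall) auto
    also have "\<dots> = nsubst X ?w (nforall Y (nf T))"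
      using rename by simp
    finally show ?thesis by simp
  qed
next
  case (4 X W a T)
  then show ?case by (simp add: nsubst_nscale)
qed auto

lemma nf_Forall_eq_imp_nf_subst_eq:
  "nf (Forall X S) = nf (Forall Y S') \<Longrightarrow> unit_ty W \<Longrightarrow> nf (subst X W S) = nf (subst Y W S')"
  unfolding nf_subst by (simp add: nforall_eq_imp_nsubst_eq[of X S Y S'])

section \<open>Soundness of normal forms\<close>

lemma unit_imp_wf: "unit_ty T \<Longrightarrow> wf_ty T"
  by (induction T) auto

lemma wf_ren: "(wf_ty T \<longrightarrow> wf_ty (ren Y Z T)) \<and> (unit_ty T \<longrightarrow> unit_ty (ren Y Z T))"
  by (induction T) auto

lemma wf_subst:
  "unit_ty W \<Longrightarrow> (wf_ty T \<longrightarrow> wf_ty (subst X W T)) \<and> (unit_ty T \<longrightarrow> unit_ty (subst X W T))"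
proof (induction X W T rule: subst.induct)
  case (3 X W Y T)
  then show ?case using wf_ren[of T Y] by (auto simp: Let_def)
qed (auto simp: unit_imp_wf)

lemmas wf_ty_subst = wf_subst[THEN conjunct1, rule_format]

lemma nf_alpha:
  assumes "Y \<notin> fv (Forall X T)"
  shows "nf (Forall X T) = nf (Forall Y (subst X (TVar Y) T))"
proof -
  have "Y \<notin> nfv (nf T) \<or> Y = X" using assms nfv_nf[of T] by auto
  then show ?thesis by (simp add: nf_subst nforall_rename)
qed

theorem nf_sound: "T \<equiv>\<^sub>T T' \<Longrightarrow> nf T = nf T'"
proof (induction rule: ty_equiv.induct)
  case alpha
  then show ?case by (intro nf_alpha) simp
next
  case (one_scal T)
  then show ?case using nf_cases[of T] by auto
next
  case (zero_scal T)
  then show ?case by (cases "nf T") auto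
next
  case (scal_scal T a b)
  then show ?case by (cases "nf T") (auto simp: mult.assoc)
next
  case (all_scal T X a)
  then show ?case by (cases "nf T") auto
qed simp_all

section \<open>Completeness of normal forms\<close>

lemmas equiv_trans[trans] = ty_equiv.trans

lemma Forall_Zero_equiv: "Forall X Zero \<equiv>\<^sub>T Zero"
proof -
  have "Forall X Zero \<equiv>\<^sub>T Forall X (Scal 0 Zero)"
    by (rule ty_equiv.cong_all, rule ty_equiv.sym, rule ty_equiv.zero_scal) simp
  also have "\<dots> \<equiv>\<^sub>T Scal 0 (Forall X Zero)"
    by (intro ty_equiv.all_scal) simp
  also have "\<dots> \<equiv>\<^sub>T Zero"
    by (intro ty_equiv.zero_scal) simp
  finally show ?thesis .
qed

text \<open>The size bound on the unit part drives the induction in the completeness proof.\<close>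
definition decomposable :: "'s::comm_ring_1 ty \<Rightarrow> bool" where
  "decomposable T \<longleftrightarrow> (nf T = NZero \<longrightarrow> T \<equiv>\<^sub>T Zero) \<and>
     (\<forall>c u. nf T = NScal c u \<longrightarrow>
        (\<exists>T0. unit_ty T0 \<and> nf T0 = NScal 1 u \<and> size T0 \<le> size T \<and> T \<equiv>\<^sub>T Scal c T0))"

lemma decomposable_unit:
  assumes "unit_ty T"
  shows "decomposable T"
proof -
  obtain u where nf: "nf T = NScal 1 u" using nf_unit[OF assms] by blast
  have "T \<equiv>\<^sub>T Scal 1 T" using assms by (rule ty_equiv.sym[OF ty_equiv.one_scal[OF unit_imp_wf]])
  then show ?thesis using assms nf by (auto simp: decomposable_def)
qed

lemma decomposable_Forall:
  assumes "decomposable T"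
  shows "decomposable (Forall X T)"
proof (cases "nf T")
  case NZero
  then have "Forall X T \<equiv>\<^sub>T Forall X Zero"
    using assms by (simp add: decomposable_def ty_equiv.cong_all)
  also have "\<dots> \<equiv>\<^sub>T Zero" by (rule Forall_Zero_equiv)
  finally show ?thesis using NZero by (simp add: decomposable_def)
next
  case (NScal c u)
  then obtain T0 where T0: "unit_ty T0" "nf T0 = NScal 1 u" "size T0 \<le> size T" "T \<equiv>\<^sub>T Scal c T0"
    using assms by (auto simp: decomposable_def)
  have "Forall X T \<equiv>\<^sub>T Forall X (Scal c T0)" using T0(4) by (rule ty_equiv.cong_all)
  also have "\<dots> \<equiv>\<^sub>T Scal c (Forall X T0)" using T0(1) by (intro ty_equiv.all_scal unit_imp_wf)
  finally show ?thesis
    using NScal T0 by (auto simp: decomposable_def intro!: exI[of _ "Forall X T0"])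
qed (use nf_cases[of T] in auto)

lemma decomposable_Scal:
  assumes "decomposable T"
  shows "decomposable (Scal a T)"
proof (cases "nf T")
  case NZero
  then have "Scal a T \<equiv>\<^sub>T Scal a Zero"
    using assms by (simp add: decomposable_def ty_equiv.cong_scal)
  also have "\<dots> \<equiv>\<^sub>T Zero" by (rule ty_equiv.scal_zero)
  finally show ?thesis using NZero by (simp add: decomposable_def)
next
  case (NScal c u)
  then obtain T0 where T0: "unit_ty T0" "nf T0 = NScal 1 u" "size T0 \<le> size T" "T \<equiv>\<^sub>T Scal c T0"
    using assms by (auto simp: decomposable_def)
  have "Scal a T \<equiv>\<^sub>T Scal a (Scal c T0)" using T0(4) by (rule ty_equiv.cong_scal)
  also have "\<dots> \<equiv>\<^sub>T Scal (a * c) T0" using T0(1) by (intro ty_equiv.scal_scal unit_imp_wf)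
  finally have equiv: "Scal a T \<equiv>\<^sub>T Scal (a * c) T0" .
  show ?thesis
  proof (cases "a * c = 0")
    case True
    have "Scal (a * c) T0 \<equiv>\<^sub>T Zero" unfolding True using T0(1) by (intro ty_equiv.zero_scal unit_imp_wf)
    with equiv have "Scal a T \<equiv>\<^sub>T Zero" by (rule ty_equiv.trans)
    then show ?thesis using True NScal by (simp add: decomposable_def)
  next
    case False
    then show ?thesis using NScal equiv T0 by (auto simp: decomposable_def)
  qed
qed (use nf_cases[of T] in auto)

lemma decomposable_wf: "wf_ty T \<Longrightarrow> decomposable T"
proof (induction T)
  case (TVar X)
  then show ?case by (simp add: decomposable_unit)
next
  case (Arr U T)
  then show ?case by (simp add: decomposable_unit)
next
  case (Forall X T)
  then show ?case by (simp add: decomposable_Forall)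
next
  case (Scal a T)
  then show ?case by (simp add: decomposable_Scal)
next
  case Zero
  then show ?case by (simp add: decomposable_def ty_equiv.refl)
qed

lemma size_subst_TVar: "size (subst X (TVar Y) T) = size T"
proof -
  have "W = TVar Y \<Longrightarrow> size (subst X W T) = size T" for W
    by (induction X W T rule: subst.induct) (auto simp: Let_def)
  then show ?thesis by simp
qed

lemma Forall_equiv_if_renamed_equiv:
  assumes "wf_ty S" "wf_ty S'"
    and renamed: "\<And>Z. Z \<notin> fv S \<Longrightarrow> Z \<notin> fv S' \<Longrightarrow> subst X (TVar Z) S \<equiv>\<^sub>T subst Y (TVar Z) S'"
  shows "Forall X S \<equiv>\<^sub>T Forall Y S'"
proof -
  define Z where "Z = fresh (vars S \<union> vars S')"
  have Z: "Z \<notin> fv S" "Z \<notin> fv S'"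
    using fresh_not_in[of "vars S \<union> vars S'"] finite_vars fv_subset_vars unfolding Z_def by blast+
  have "Forall X S \<equiv>\<^sub>T Forall Z (subst X (TVar Z) S)"
    using Z assms(1) by (intro ty_equiv.alpha) auto
  also have "\<dots> \<equiv>\<^sub>T Forall Z (subst Y (TVar Z) S')"
    using renamed[OF Z] by (rule ty_equiv.cong_all)
  also have "\<dots> \<equiv>\<^sub>T Forall Y S'"
    using Z assms(2) by (intro ty_equiv.sym[OF ty_equiv.alpha]) auto
  finally show ?thesis .
qed

lemma unit_equiv_if_nf_eq:
  fixes A B :: "'s::comm_ring_1 ty"
  assumes IH: "\<And>A' B' :: 's ty. size A' + size B' < size A + size B \<Longrightarrow> wf_ty A' \<Longrightarrow> wf_ty B' \<Longrightarrow>
      nf A' = nf B' \<Longrightarrow> A' \<equiv>\<^sub>T B'"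
    and A: "unit_ty A" and B: "unit_ty B" and eq: "nf A = nf B"
  shows "A \<equiv>\<^sub>T B"
proof (cases A)
  case (TVar X)
  then show ?thesis using B eq by (cases B) (auto intro: ty_equiv.refl simp: nforall_nf_unit)
next
  case (Arr U1 T1)
  show ?thesis
  proof (cases B)
    case (Arr U2 T2)
    have units: "unit_ty U1" "unit_ty U2" "wf_ty T1" "wf_ty T2"
      using A B \<open>A = Arr U1 T1\<close> Arr by auto
    have nf_eq: "nf U1 = nf U2"
      using eq \<open>A = Arr U1 T1\<close> Arr nf_unit[OF units(1)] nf_unit[OF units(2)] by simp
    have "U1 \<equiv>\<^sub>T U2" by (rule IH) (use nf_eq \<open>A = Arr U1 T1\<close> Arr units in \<open>auto simp: unit_imp_wf\<close>)
    moreover have "T1 \<equiv>\<^sub>T T2" by (rule IH) (use eq \<open>A = Arr U1 T1\<close> Arr units in auto)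
    ultimately show ?thesis using \<open>A = Arr U1 T1\<close> Arr units by (simp add: ty_equiv.cong_arr)
  qed (use eq B \<open>A = Arr U1 T1\<close> in \<open>auto simp: nforall_nf_unit\<close>)
next
  case (Forall X S)
  show ?thesis
  proof (cases B)
    case (Forall Y S')
    have units: "unit_ty S" "unit_ty S'" using A B \<open>A = Forall X S\<close> Forall by auto
    show ?thesis
      unfolding \<open>A = Forall X S\<close> Forall
    proof (rule Forall_equiv_if_renamed_equiv)
      fix Z
      have "nf (subst X (TVar Z) S) = nf (subst Y (TVar Z) S')"
        using eq \<open>A = Forall X S\<close> Forall by (intro nf_Forall_eq_imp_nf_subst_eq) auto
      then show "subst X (TVar Z) S \<equiv>\<^sub>T subst Y (TVar Z) S'"
        by (rule IH[rotated 3])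
          (use \<open>A = Forall X S\<close> Forall units in \<open>auto simp: size_subst_TVar wf_ty_subst unit_imp_wf\<close>)
    qed (use units in \<open>auto simp: unit_imp_wf\<close>)
  qed (use eq A B \<open>A = Forall X S\<close> in \<open>auto simp: nforall_nf_unit\<close>)
qed (use A in auto)

theorem nf_complete:
  fixes A B :: "'s::comm_ring_1 ty"
  shows "wf_ty A \<Longrightarrow> wf_ty B \<Longrightarrow> nf A = nf B \<Longrightarrow> A \<equiv>\<^sub>T B"
proof (induction "size A + size B" arbitrary: A B rule: less_induct)
  case less
  show ?case
  proof (cases "nf A")
    case NZero
    then have "A \<equiv>\<^sub>T Zero" "Zero \<equiv>\<^sub>T B"
      using less.prems decomposable_wf by (auto simp: decomposable_def intro: ty_equiv.sym)
    then show ?thesis by (rule ty_equiv.trans)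
  next
    case (NScal c u)
    obtain A0 where A0: "unit_ty A0" "nf A0 = NScal 1 u" "size A0 \<le> size A" "A \<equiv>\<^sub>T Scal c A0"
      using decomposable_wf[OF less.prems(1)] NScal by (auto simp: decomposable_def)
    obtain B0 where B0: "unit_ty B0" "nf B0 = NScal 1 u" "size B0 \<le> size B" "B \<equiv>\<^sub>T Scal c B0"
      using decomposable_wf[OF less.prems(2)] NScal less.prems(3) by (auto simp: decomposable_def)
    have "A0 \<equiv>\<^sub>T B0"
    proof (rule unit_equiv_if_nf_eq)
      fix A' B' :: "'s ty"
      assume "size A' + size B' < size A0 + size B0"
        and "wf_ty A'" "wf_ty B'" "nf A' = nf B'"
      then show "A' \<equiv>\<^sub>T B'"
        using A0(3) B0(3) less.hyps[of A' B'] by simp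
    qed (use A0 B0 in auto)
    have "A \<equiv>\<^sub>T Scal c A0" by (rule A0(4))
    also have "\<dots> \<equiv>\<^sub>T Scal c B0" using \<open>A0 \<equiv>\<^sub>T B0\<close> by (rule ty_equiv.cong_scal)
    also have "\<dots> \<equiv>\<^sub>T B" using B0(4) by (rule ty_equiv.sym)
    finally show ?thesis .
  qed (use nf_cases[of A] in auto)
qed

section \<open>Chains of abstractions and instantiations\<close>

definition unit_substitution :: "(nat \<times> 's ty) list \<Rightarrow> bool" where
  "unit_substitution \<sigma> \<longleftrightarrow> (\<forall>(X, W) \<in> set \<sigma>. unit_ty W)"

lemma unit_substitution_Nil [simp]: "unit_substitution []"
  and unit_substitution_Cons [simp]: "unit_substitution ((X, W) # \<sigma>) \<longleftrightarrow> unit_ty W \<and> unit_substitution \<sigma>"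
  and unit_substitution_append [simp]: "unit_substitution (\<sigma> @ \<tau>) \<longleftrightarrow> unit_substitution \<sigma> \<and> unit_substitution \<tau>"
  by (auto simp: unit_substitution_def)

fun Foralls :: "nat list \<Rightarrow> 's ty \<Rightarrow> 's ty" where
  "Foralls [] T = T"
| "Foralls (Y # Ys) T = Forall Y (Foralls Ys T)"

lemma vars_Foralls: "vars (Foralls Ys D) = set Ys \<union> vars D"
  by (induction Ys) auto

lemma substs_append: "substs (\<sigma> @ \<tau>) T = substs \<tau> (substs \<sigma> T)"
  by (induction \<sigma> arbitrary: T) auto

lemma substs_Arr: "substs \<sigma> (Arr A B) = Arr (substs \<sigma> A) (substs \<sigma> B)"
  by (induction \<sigma> arbitrary: A B) auto

lemma wf_ty_substs: "unit_substitution \<sigma> \<Longrightarrow> wf_ty T \<Longrightarrow> wf_ty (substs \<sigma> T)"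
  by (induction \<sigma> arbitrary: T) (auto simp: wf_ty_subst)

lemma ren_eq_subst: "Z \<notin> vars E \<Longrightarrow> ren Y Z E = subst Y (TVar Z) E"
  by (induction E) auto

lemma ren_Foralls:
  "Z \<notin> vars D \<Longrightarrow> \<exists>\<tau>. unit_substitution \<tau> \<and> ren Y Z (Foralls Ys D) = Foralls Ys (substs \<tau> D)"
proof (induction Ys)
  case Nil
  then show ?case by (intro exI[of _ "[(Y, TVar Z)]"]) (simp add: ren_eq_subst)
next
  case (Cons V Ys)
  then show ?case by (cases "V = Y") (auto intro: exI[of _ "[]"])
qed

lemma subst_Foralls:
  "unit_ty W \<Longrightarrow>
    \<exists>Ys' \<tau>. unit_substitution \<tau> \<and> subst X W (Foralls Ys D) = Foralls Ys' (substs \<tau> D)"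
proof (induction Ys arbitrary: D)
  case Nil
  then show ?case by (intro exI[of _ "[]"] exI[of _ "[(X, W)]"]) simp
next
  case (Cons Z Ys)
  consider (bound) "Z = X" | (free) "Z \<noteq> X" "Z \<notin> fv W" | (capture) "Z \<noteq> X" "Z \<in> fv W"
    by blast
  then show ?case
  proof cases
    case bound
    then show ?thesis by (intro exI[of _ "Z # Ys"] exI[of _ "[]"]) simp
  next
    case free
    then show ?thesis using Cons by (metis Foralls.simps(2) subst.simps(3))
  next
    case capture
    define Z' where "Z' = fresh (insert X (vars W \<union> vars (Foralls Ys D)))"
    have "Z' \<notin> vars D"
      using fresh_not_in[of "insert X (vars W \<union> vars (Foralls Ys D))"] finite_vars
      unfolding Z'_def vars_Foralls by blast
    then obtain \<tau>1 where \<tau>1: "unit_substitution \<tau>1" "ren Z Z' (Foralls Ys D) = Foralls Ys (substs \<tau>1 D)"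
      using ren_Foralls by blast
    obtain Ys' \<tau>2 where \<tau>2: "unit_substitution \<tau>2"
        "subst X W (Foralls Ys (substs \<tau>1 D)) = Foralls Ys' (substs \<tau>2 (substs \<tau>1 D))"
      using Cons by blast
    have "subst X W (Foralls (Z # Ys) D) = Forall Z' (subst X W (ren Z Z' (Foralls Ys D)))"
      using capture by (simp add: Z'_def[symmetric] Let_def)
    also have "\<dots> = Foralls (Z' # Ys') (substs (\<tau>1 @ \<tau>2) D)"
      using \<tau>1 \<tau>2 by (simp add: substs_append)
    finally show ?thesis using \<tau>1 \<tau>2 by (intro exI[of _ "Z' # Ys'"] exI[of _ "\<tau>1 @ \<tau>2"]) auto
  qed
qed

lemma prec_chain_from_Arr_nf:
  assumes "prec1\<^sup>*\<^sup>* (Arr V R) A"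
  shows "\<exists>Ys \<sigma>. unit_substitution \<sigma> \<and> nf A = nf (Foralls Ys (substs \<sigma> (Arr V R)))"
  using assms
proof (induction rule: rtranclp_induct)
  case base
  show ?case by (intro exI[of _ "[]"] exI[of _ "[]"]) simp
next
  case (step A A')
  then obtain Ys \<sigma> where \<sigma>: "unit_substitution \<sigma>" and A: "nf A = nf (Foralls Ys (substs \<sigma> (Arr V R)))"
    by blast
  from step.hyps(2) show ?case unfolding prec1_def
  proof (elim disjE exE conjE)
    fix X
    assume "A' \<equiv>\<^sub>T Forall X A"
    then have "nf A' = nf (Foralls (X # Ys) (substs \<sigma> (Arr V R)))"
      using A by (simp add: nf_sound)
    then show ?thesis using \<sigma> by blast
  next
    fix X S W
    assume W: "unit_ty W" and AS: "A \<equiv>\<^sub>T Forall X S" and A'S: "A' \<equiv>\<^sub>T subst X W S"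
    obtain Y Ys' where Ys: "Ys = Y # Ys'"
      using A nf_sound[OF AS] by (cases Ys) (auto simp: substs_Arr nforall_neq_arrow)
    obtain Ys'' \<tau> where \<tau>: "unit_substitution \<tau>"
        "subst Y W (Foralls Ys' (substs \<sigma> (Arr V R))) = Foralls Ys'' (substs \<tau> (substs \<sigma> (Arr V R)))"
      using subst_Foralls[OF W] by blast
    have "nf (Forall X S) = nf (Forall Y (Foralls Ys' (substs \<sigma> (Arr V R))))"
      using A nf_sound[OF AS] Ys by simp
    then have "nf (subst X W S) = nf (subst Y W (Foralls Ys' (substs \<sigma> (Arr V R))))"
      using W by (rule nf_Forall_eq_imp_nf_subst_eq)
    then have "nf A' = nf (Foralls Ys'' (substs (\<sigma> @ \<tau>) (Arr V R)))"
      using nf_sound[OF A'S] \<tau> by (simp add: substs_append)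
    then show ?thesis using \<sigma> \<tau>(1) by (intro exI[of _ Ys''] exI[of _ "\<sigma> @ \<tau>"]) simp
  qed
qed

theorem mainTheorem16:
  fixes U V T R :: "'s::comm_ring_1 ty"
  assumes "unit_ty U" and "unit_ty V" and "wf_ty T" and "wf_ty R"
    and "preceq (Arr V R) (Arr U T)"
  shows "\<exists>\<sigma> :: (nat \<times> 's ty) list. (\<forall>(X, W) \<in> set \<sigma>. unit_ty W) \<and>
           Arr U T \<equiv>\<^sub>T substs \<sigma> (Arr V R)"
proof -
  obtain Ys \<sigma> where \<sigma>: "unit_substitution \<sigma>"
    and eq: "nf (Arr U T) = nf (Foralls Ys (substs \<sigma> (Arr V R)))"
    using prec_chain_from_Arr_nf assms(5) unfolding preceq_def by blast
  have "Ys = []"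
    using eq by (cases Ys) (auto simp: nforall_neq_arrow[symmetric])
  moreover have "wf_ty (substs \<sigma> (Arr V R))"
    using \<sigma> assms(2,4) by (intro wf_ty_substs) auto
  ultimately have "Arr U T \<equiv>\<^sub>T substs \<sigma> (Arr V R)"
    using eq assms(1,3) by (intro nf_complete) auto
  then show ?thesis using \<sigma> unfolding unit_substitution_def by blast
qed

end
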